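(* Let $\mathcal{H}=(V,\vec H,\bm{w})$ be a finite, loopless, strongly connected, weighted directed hypergraph with $|V|\ge2$, and let $h=(A_h,B_h)\in\vec H$ with $B_h=\{y_1,\dots,y_m\}$. Then for every $\alpha\in[0,1]$, $$\kappa_\alpha(h)\le\frac{1-\alpha}{L(h)}\left(\frac{1}{m}\sum_{j=1}^m C(y_j,\bm{w})+\mathrm{diam}(\mathcal{H})\right),$$ where $C(y_j,\bm w)$ is defined below.
   Context: A weighted directed hypergraph $(V,\vec H,\bm{w})$ has a finite vertex set $V$, a finite set $\vec H$ of hyperedges, each an ordered pair $h=(A_h,B_h)$ of nonempty subsets of $V$, and positive weights $w_h>0$. It is loopless if $A_h\cap B_h=\emptyset$ for all $h$. A directed path from $u$ to $v$ is a sequence of hyperedges $h_1,\dots,h_l$ with $u\in A_{h_1}$, $v\in B_{h_l}$ and $B_{h_j}\cap A_{h_{j+1}}\ne\emptyset$; strongly connected means a directed path exists from $u$ to $v$ for all distinct $u,v$. Quasi-distance: $d(u,v)=\inf_\gamma\sum_{h\in\gamma}w_h$ over directed paths from $u$ to $v$ ($u\neq v$), $d(u,u)=0$; $\mathrm{diam}(\mathcal{H})=\max_{u,v}d(u,v)$. $L(h)=\min_{x\in A_h,y\in B_h}d(x,y)$. $\Gamma^{in}(v)=\{z:\exists h'\text{ with }v\in B_{h'},z\in A_{h'}\}$, $\Gamma^{out}(v)=\{z:\exists h'\text{ with }v\in A_{h'},z\in B_{h'}\}$. For $h$ with $A_h=\{x_1,\dots,x_n\}$, $B_h=\{y_1,\dots,y_m\}$,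 $\alpha\in[0,1]$: $\mu^\alpha_{A_h}=\sum_i\mu^\alpha_{x_i}$ with $\mu^\alpha_{x_i}(x_i)=\alpha/n$, $\mu^\alpha_{x_i}(z)=(1-\alpha)\sum_{h':x_i\in B_{h'},z\in A_{h'}}\frac{1}{n|A_{h'}|}\frac{w_{h'}}{\sum_{h'':x_i\in B_{h''}}w_{h''}}$ for $z\in\Gamma^{in}(x_i)$, $0$ otherwise; $\mu^\alpha_{B_h}=\sum_j\mu^\alpha_{y_j}$ with $\mu^\alpha_{y_j}(y_j)=\alpha/m$, $\mu^\alpha_{y_j}(z)=(1-\alpha)\sum_{h':y_j\in A_{h'},z\in B_{h'}}\frac{1}{m|B_{h'}|}\frac{w_{h'}}{\sum_{h'':y_j\in A_{h''}}w_{h''}}$ for $z\in\Gamma^{out}(y_j)$, $0$ otherwise. $W(\mu,\nu)=\inf_\pi\sum_{u,v}\pi(u,v)d(u,v)$ over couplings $\pi$ with $\sum_v\pi(u,v)=\mu(u)$, $\sum_u\pi(u,v)=\nu(v)$. $\kappa_\alpha(h)=1-W(\mu^\alpha_{A_h},\mu^\alpha_{B_h})/L(h)$. Definition of $C$: let $d(A_h,z)=\min_{x\in A_h}d(x,z)$. For $y\in B_h$ set $\Gamma^-_y=\{z\in\Gamma^{out}(y):d(A_h,z)<d(A_h,y)\}$, $\Gamma^+_y=\{z\in\Gamma^{out}(y):d(A_h,z)>d(A_h,y)\}$; $C_1(y)=d(A_h,y)-\min_{z\in\Gamma^-_y}d(A_h,z)$ (or $0$ if $\Gamma^-_y=\emptyset$),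 $C_2(y)=\min_{z\in\Gamma^+_y}d(A_h,z)-d(A_h,y)$ (or $0$ if $\Gamma^+_y=\emptyset$), and $$C(y,\bm w)=\frac{C_1(y)\sum_{z\in\Gamma^-_y}\sum_{h':y\in A_{h'},z\in B_{h'}}\frac{w_{h'}}{|B_{h'}|}-C_2(y)\sum_{z\in\Gamma^+_y}\sum_{h':y\in A_{h'},z\in B_{h'}}\frac{w_{h'}}{|B_{h'}|}}{\sum_{h':y\in A_{h'}}w_{h'}}.$$ *)

theory Defs
  imports Complex_Main
begin

text \<open>A hyperedge is an ordered pair (A_h, B_h) of vertex sets; tail = fst, head = snd.
  A weighted directed hypergraph is (V, H, w) with H a set of such pairs and
  w a weight function on hyperedges.\<close>

type_synonym 'v hedge = "'v set \<times> 'v set"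

definition dir_hypergraph :: "'v set \<Rightarrow> 'v hedge set \<Rightarrow> ('v hedge \<Rightarrow> real) \<Rightarrow> bool" where
  "dir_hypergraph V H w \<longleftrightarrow> finite V \<and> finite H \<and>
     (\<forall>h\<in>H. fst h \<noteq> {} \<and> snd h \<noteq> {} \<and> fst h \<subseteq> V \<and> snd h \<subseteq> V \<and> w h > 0)"

definition loopless :: "'v hedge set \<Rightarrow> bool" where
  "loopless H \<longleftrightarrow> (\<forall>h\<in>H. fst h \<inter> snd h = {})"

definition is_dpath :: "'v hedge set \<Rightarrow> 'v \<Rightarrow> 'v \<Rightarrow> 'v hedge list \<Rightarrow> bool" where
  "is_dpath H u v \<gamma> \<longleftrightarrow> \<gamma> \<noteq> [] \<and> set \<gamma> \<subseteq> H \<and> u \<in> fst (hd \<gamma>) \<and> v \<in> snd (last \<gamma>) \<and>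
     (\<forall>j. Suc j < length \<gamma> \<longrightarrow> snd (\<gamma> ! j) \<inter> fst (\<gamma> ! Suc j) \<noteq> {})"

definition strongly_connected :: "'v set \<Rightarrow> 'v hedge set \<Rightarrow> bool" where
  "strongly_connected V H \<longleftrightarrow> (\<forall>u\<in>V. \<forall>v\<in>V. u \<noteq> v \<longrightarrow> (\<exists>\<gamma>. is_dpath H u v \<gamma>))"

definition qdist :: "'v hedge set \<Rightarrow> ('v hedge \<Rightarrow> real) \<Rightarrow> 'v \<Rightarrow> 'v \<Rightarrow> real" where
  "qdist H w u v = (if u = v then 0
     else Inf {sum_list (map w \<gamma>) | \<gamma>. is_dpath H u v \<gamma>})"

definition diam :: "'v set \<Rightarrow> 'v hedge set \<Rightarrow> ('v hedge \<Rightarrow> real) \<Rightarrow> real" where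
  "diam V H w = Max {qdist H w u v | u v. u \<in> V \<and> v \<in> V}"

definition Lh :: "'v hedge set \<Rightarrow> ('v hedge \<Rightarrow> real) \<Rightarrow> 'v hedge \<Rightarrow> real" where
  "Lh H w h = Min {qdist H w x y | x y. x \<in> fst h \<and> y \<in> snd h}"

definition Gamma_in :: "'v hedge set \<Rightarrow> 'v \<Rightarrow> 'v set" where
  "Gamma_in H v = {z. \<exists>h'\<in>H. v \<in> snd h' \<and> z \<in> fst h'}"

definition Gamma_out :: "'v hedge set \<Rightarrow> 'v \<Rightarrow> 'v set" where
  "Gamma_out H v = {z. \<exists>h'\<in>H. v \<in> fst h' \<and> z \<in> snd h'}"

definition mu_tail_vertex :: "'v hedge set \<Rightarrow> ('v hedge \<Rightarrow> real) \<Rightarrow> real \<Rightarrow> nat \<Rightarrow> 'v \<Rightarrow> 'v \<Rightarrow> real" where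
  "mu_tail_vertex H w \<alpha> n x z =
     (if z = x then \<alpha> / real n
      else if z \<in> Gamma_in H x then
        (1 - \<alpha>) * (\<Sum>h'\<in>{h'\<in>H. x \<in> snd h' \<and> z \<in> fst h'}.
            (1 / (real n * real (card (fst h')))) *
            (w h' / (\<Sum>h''\<in>{h''\<in>H. x \<in> snd h''}. w h'')))
      else 0)"

definition mu_tail :: "'v hedge set \<Rightarrow> ('v hedge \<Rightarrow> real) \<Rightarrow> real \<Rightarrow> 'v hedge \<Rightarrow> 'v \<Rightarrow> real" where
  "mu_tail H w \<alpha> h z = (\<Sum>x\<in>fst h. mu_tail_vertex H w \<alpha> (card (fst h)) x z)"

definition mu_head_vertex :: "'v hedge set \<Rightarrow> ('v hedge \<Rightarrow> real) \<Rightarrow> real \<Rightarrow> nat \<Rightarrow> 'v \<Rightarrow> 'v \<Rightarrow> real" where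
  "mu_head_vertex H w \<alpha> m y z =
     (if z = y then \<alpha> / real m
      else if z \<in> Gamma_out H y then
        (1 - \<alpha>) * (\<Sum>h'\<in>{h'\<in>H. y \<in> fst h' \<and> z \<in> snd h'}.
            (1 / (real m * real (card (snd h')))) *
            (w h' / (\<Sum>h''\<in>{h''\<in>H. y \<in> fst h''}. w h'')))
      else 0)"

definition mu_head :: "'v hedge set \<Rightarrow> ('v hedge \<Rightarrow> real) \<Rightarrow> real \<Rightarrow> 'v hedge \<Rightarrow> 'v \<Rightarrow> real" where
  "mu_head H w \<alpha> h z = (\<Sum>y\<in>snd h. mu_head_vertex H w \<alpha> (card (snd h)) y z)"

definition coupling :: "'v set \<Rightarrow> ('v \<Rightarrow> real) \<Rightarrow> ('v \<Rightarrow> real) \<Rightarrow> ('v \<Rightarrow> 'v \<Rightarrow> real) \<Rightarrow> bool" where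
  "coupling V \<mu> \<nu> \<pi> \<longleftrightarrow>
     (\<forall>u\<in>V. \<forall>v\<in>V. \<pi> u v \<ge> 0) \<and>
     (\<forall>u\<in>V. (\<Sum>v\<in>V. \<pi> u v) = \<mu> u) \<and>
     (\<forall>v\<in>V. (\<Sum>u\<in>V. \<pi> u v) = \<nu> v)"

definition wasserstein :: "'v set \<Rightarrow> 'v hedge set \<Rightarrow> ('v hedge \<Rightarrow> real) \<Rightarrow> ('v \<Rightarrow> real) \<Rightarrow> ('v \<Rightarrow> real) \<Rightarrow> real" where
  "wasserstein V H w \<mu> \<nu> =
     Inf {(\<Sum>u\<in>V. \<Sum>v\<in>V. \<pi> u v * qdist H w u v) | \<pi>. coupling V \<mu> \<nu> \<pi>}"

definition kappa :: "'v set \<Rightarrow> 'v hedge set \<Rightarrow> ('v hedge \<Rightarrow> real) \<Rightarrow> real \<Rightarrow> 'v hedge \<Rightarrow> real" where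
  "kappa V H w \<alpha> h = 1 - wasserstein V H w (mu_tail H w \<alpha> h) (mu_head H w \<alpha> h) / Lh H w h"

definition distA :: "'v hedge set \<Rightarrow> ('v hedge \<Rightarrow> real) \<Rightarrow> 'v hedge \<Rightarrow> 'v \<Rightarrow> real" where
  "distA H w h z = Min {qdist H w x z | x. x \<in> fst h}"

definition Gamma_minus :: "'v hedge set \<Rightarrow> ('v hedge \<Rightarrow> real) \<Rightarrow> 'v hedge \<Rightarrow> 'v \<Rightarrow> 'v set" where
  "Gamma_minus H w h y = {z \<in> Gamma_out H y. distA H w h z < distA H w h y}"

definition Gamma_plus :: "'v hedge set \<Rightarrow> ('v hedge \<Rightarrow> real) \<Rightarrow> 'v hedge \<Rightarrow> 'v \<Rightarrow> 'v set" where
  "Gamma_plus H w h y = {z \<in> Gamma_out H y. distA H w h z > distA H w h y}"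

definition C1 :: "'v hedge set \<Rightarrow> ('v hedge \<Rightarrow> real) \<Rightarrow> 'v hedge \<Rightarrow> 'v \<Rightarrow> real" where
  "C1 H w h y = (if Gamma_minus H w h y = {} then 0
     else distA H w h y - Min (distA H w h ` Gamma_minus H w h y))"

definition C2 :: "'v hedge set \<Rightarrow> ('v hedge \<Rightarrow> real) \<Rightarrow> 'v hedge \<Rightarrow> 'v \<Rightarrow> real" where
  "C2 H w h y = (if Gamma_plus H w h y = {} then 0
     else Min (distA H w h ` Gamma_plus H w h y) - distA H w h y)"

definition Cw :: "'v hedge set \<Rightarrow> ('v hedge \<Rightarrow> real) \<Rightarrow> 'v hedge \<Rightarrow> 'v \<Rightarrow> real" where
  "Cw H w h y =
     (C1 H w h y * (\<Sum>z\<in>Gamma_minus H w h y. \<Sum>h'\<in>{h'\<in>H. y \<in> fst h' \<and> z \<in> snd h'}. w h' / real (card (snd h')))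
      - C2 H w h y * (\<Sum>z\<in>Gamma_plus H w h y. \<Sum>h'\<in>{h'\<in>H. y \<in> fst h' \<and> z \<in> snd h'}. w h' / real (card (snd h'))))
     / (\<Sum>h'\<in>{h'\<in>H. y \<in> fst h'}. w h')"

end

(*
  Test the transport cost against the potential f = d(A_h, -), which is 1-Lipschitz for the
  quasi-distance, so that W(mu_A, mu_B) >= E_mu_B f - E_mu_A f. The potential vanishes on A_h and is
  at most diam(H), so the lazy walk from the tail gives E_mu_A f <= (1 - alpha) diam(H). On the
  head, f(y) >= L(h), and one step of the walk out of y decreases f on average by at most C(y, w),
  so E_mu_B f >= L(h) - (1 - alpha)/m sum_j C(y_j, w).
*)

theory Submission
  imports Defs
begin

lemma is_dpath_append:
  assumes "is_dpath H x u \<gamma>\<^sub>1" "is_dpath H u v \<gamma>\<^sub>2"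
  shows "is_dpath H x v (\<gamma>\<^sub>1 @ \<gamma>\<^sub>2)"
  unfolding is_dpath_def
proof (intro conjI allI impI)
  note p1 = assms(1)[unfolded is_dpath_def] and p2 = assms(2)[unfolded is_dpath_def]
  show "\<gamma>\<^sub>1 @ \<gamma>\<^sub>2 \<noteq> []" "set (\<gamma>\<^sub>1 @ \<gamma>\<^sub>2) \<subseteq> H"
    "x \<in> fst (hd (\<gamma>\<^sub>1 @ \<gamma>\<^sub>2))" "v \<in> snd (last (\<gamma>\<^sub>1 @ \<gamma>\<^sub>2))"
    using p1 p2 by auto
  fix j assume j: "Suc j < length (\<gamma>\<^sub>1 @ \<gamma>\<^sub>2)"
  consider "Suc j < length \<gamma>\<^sub>1" | "Suc j = length \<gamma>\<^sub>1" | "length \<gamma>\<^sub>1 \<le> j" by linarith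
  then show "snd ((\<gamma>\<^sub>1 @ \<gamma>\<^sub>2) ! j) \<inter> fst ((\<gamma>\<^sub>1 @ \<gamma>\<^sub>2) ! Suc j) \<noteq> {}"
  proof cases
    case 1
    then show ?thesis using p1 by (simp add: nth_append)
  next
    case 2
    then have "j = length \<gamma>\<^sub>1 - 1" by simp
    then have "(\<gamma>\<^sub>1 @ \<gamma>\<^sub>2) ! j = last \<gamma>\<^sub>1" "(\<gamma>\<^sub>1 @ \<gamma>\<^sub>2) ! Suc j = hd \<gamma>\<^sub>2"
      using p1 p2 2 by (simp_all add: nth_append last_conv_nth hd_conv_nth)
    then show ?thesis using p1 p2 by auto
  next
    case 3
    then have "Suc (j - length \<gamma>\<^sub>1) < length \<gamma>\<^sub>2" "Suc j - length \<gamma>\<^sub>1 = Suc (j - length \<gamma>\<^sub>1)"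
      using j by auto
    then show ?thesis using p2 3 by (simp add: nth_append)
  qed
qed

lemma path_weight_nonneg:
  fixes w :: "'a \<Rightarrow> real"
  shows "set \<gamma> \<subseteq> H \<Longrightarrow> \<forall>h\<in>H. 0 \<le> w h \<Longrightarrow> 0 \<le> sum_list (map w \<gamma>)"
  by (induction \<gamma>) auto

lemma qdist_le_path_weight:
  assumes "\<forall>h\<in>H. 0 \<le> w h" "u \<noteq> v" "is_dpath H u v \<gamma>"
  shows "qdist H w u v \<le> sum_list (map w \<gamma>)"
proof -
  have "bdd_below {sum_list (map w \<gamma>) | \<gamma>. is_dpath H u v \<gamma>}"
    using assms(1) by (intro bdd_belowI[of _ 0]) (auto simp: is_dpath_def intro: path_weight_nonneg)
  then show ?thesis
    using assms(2,3) unfolding qdist_def by (auto intro: cInf_lower)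
qed

lemma qdist_greatest:
  assumes "u \<noteq> v" "is_dpath H u v \<gamma>" "\<And>\<gamma>. is_dpath H u v \<gamma> \<Longrightarrow> c \<le> sum_list (map w \<gamma>)"
  shows "c \<le> qdist H w u v"
  using assms unfolding qdist_def by (auto intro!: cInf_greatest)

lemma qdist_pos_if_path:
  assumes "finite H" "\<forall>h\<in>H. 0 < w h" "u \<noteq> v" "is_dpath H u v \<gamma>"
  shows "0 < qdist H w u v"
proof -
  have "H \<noteq> {}" using assms(4) by (cases \<gamma>) (auto simp: is_dpath_def)
  then have "0 < Min (w ` H)" using assms(1,2) by simp
  also have "Min (w ` H) \<le> qdist H w u v"
  proof (rule qdist_greatest[OF assms(3,4)])
    fix \<gamma>' assume "is_dpath H u v \<gamma>'"
    then obtain e \<gamma>'' where "\<gamma>' = e # \<gamma>''" "e \<in> H" "set \<gamma>'' \<subseteq> H"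
      by (cases \<gamma>') (auto simp: is_dpath_def)
    moreover have "0 \<le> sum_list (map w \<gamma>'')"
      using assms(2) \<open>set \<gamma>'' \<subseteq> H\<close> by (simp add: path_weight_nonneg less_imp_le)
    ultimately show "Min (w ` H) \<le> sum_list (map w \<gamma>')"
      using assms(1) by (simp add: add_increasing2)
  qed
  finally show ?thesis .
qed

lemma qdist_self [simp]: "qdist H w u u = 0"
  by (simp add: qdist_def)

lemma qdist_nonneg_if_path:
  assumes "\<forall>h\<in>H. 0 \<le> w h" "is_dpath H u v \<gamma>"
  shows "0 \<le> qdist H w u v"
proof (cases "u = v")
  case False
  then show ?thesis
    using assms by (intro qdist_greatest) (auto simp: is_dpath_def intro: path_weight_nonneg)
qed simp

lemma qdist_triangle_if_connected:
  assumes "\<forall>h\<in>H. 0 \<le> w h"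
    and paths: "\<And>a b. a \<in> V \<Longrightarrow> b \<in> V \<Longrightarrow> a \<noteq> b \<Longrightarrow> \<exists>\<gamma>. is_dpath H a b \<gamma>"
    and "x \<in> V" "u \<in> V" "v \<in> V"
  shows "qdist H w x v \<le> qdist H w x u + qdist H w u v"
proof (cases "x = u \<or> u = v \<or> x = v")
  case True
  have "0 \<le> qdist H w a b" if ab: "a \<in> V" "b \<in> V" for a b
  proof (cases "a = b")
    case False
    then obtain \<gamma> where "is_dpath H a b \<gamma>"
      using paths ab by blast
    then show ?thesis
      by (rule qdist_nonneg_if_path[OF assms(1)])
  qed simp
  then show ?thesis using True assms(3-5) by auto
next
  case False
  then have "x \<noteq> u" "u \<noteq> v" "x \<noteq> v" by auto
  obtain \<gamma>\<^sub>1 \<gamma>\<^sub>2 where "is_dpath H x u \<gamma>\<^sub>1" "is_dpath H u v \<gamma>\<^sub>2"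
    using paths assms(3-5) \<open>x \<noteq> u\<close> \<open>u \<noteq> v\<close> by blast
  have "qdist H w x v - sum_list (map w \<beta>) \<le> qdist H w x u" if "is_dpath H u v \<beta>" for \<beta>
    using qdist_le_path_weight[OF assms(1) \<open>x \<noteq> v\<close> is_dpath_append[OF _ that]]
    by (intro qdist_greatest[OF \<open>x \<noteq> u\<close> \<open>is_dpath H x u \<gamma>\<^sub>1\<close>]) (simp add: algebra_simps)
  then have "qdist H w x v - qdist H w x u \<le> qdist H w u v"
    by (intro qdist_greatest[OF \<open>u \<noteq> v\<close> \<open>is_dpath H u v \<gamma>\<^sub>2\<close>]) (simp add: algebra_simps)
  then show ?thesis by simp
qed

lemma coupling_product:
  assumes "\<forall>u\<in>V. 0 \<le> \<mu> u" "\<forall>v\<in>V. 0 \<le> \<nu> v" "sum \<mu> V = 1" "sum \<nu> V = 1"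
  shows "coupling V \<mu> \<nu> (\<lambda>u v. \<mu> u * \<nu> v)"
  using assms by (simp add: coupling_def flip: sum_distrib_left sum_distrib_right)

text \<open>The easy half of Kantorovich--Rubinstein duality: a potential that is 1-Lipschitz for the
  quasi-distance bounds the transport cost from below.\<close>

lemma coupling_cost_ge_potential_gap:
  assumes "coupling V \<mu> \<nu> \<pi>"
    and lip: "\<And>u v. u \<in> V \<Longrightarrow> v \<in> V \<Longrightarrow> f v - f u \<le> qdist H w u v"
  shows "(\<Sum>v\<in>V. \<nu> v * f v) - (\<Sum>u\<in>V. \<mu> u * f u) \<le> (\<Sum>u\<in>V. \<Sum>v\<in>V. \<pi> u v * qdist H w u v)"
proof -
  have \<pi>: "\<And>u v. u \<in> V \<Longrightarrow> v \<in> V \<Longrightarrow> 0 \<le> \<pi> u v"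
    "\<And>u. u \<in> V \<Longrightarrow> (\<Sum>v\<in>V. \<pi> u v) = \<mu> u" "\<And>v. v \<in> V \<Longrightarrow> (\<Sum>u\<in>V. \<pi> u v) = \<nu> v"
    using assms(1) by (auto simp: coupling_def)
  have "(\<Sum>v\<in>V. \<nu> v * f v) = (\<Sum>u\<in>V. \<Sum>v\<in>V. \<pi> u v * f v)"
    by (subst sum.swap) (simp add: \<pi>(3) flip: sum_distrib_right)
  moreover have "(\<Sum>u\<in>V. \<mu> u * f u) = (\<Sum>u\<in>V. \<Sum>v\<in>V. \<pi> u v * f u)"
    by (simp add: \<pi>(2) flip: sum_distrib_right)
  moreover have "(\<Sum>u\<in>V. \<Sum>v\<in>V. \<pi> u v * (f v - f u)) \<le> (\<Sum>u\<in>V. \<Sum>v\<in>V. \<pi> u v * qdist H w u v)"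
    by (intro sum_mono mult_left_mono lip \<pi>(1))
  ultimately show ?thesis
    by (simp add: right_diff_distrib sum_subtractf)
qed

lemma wasserstein_ge_potential_gap:
  assumes "\<forall>u\<in>V. 0 \<le> \<mu> u" "\<forall>v\<in>V. 0 \<le> \<nu> v" "sum \<mu> V = 1" "sum \<nu> V = 1"
    and "\<And>u v. u \<in> V \<Longrightarrow> v \<in> V \<Longrightarrow> f v - f u \<le> qdist H w u v"
  shows "(\<Sum>v\<in>V. \<nu> v * f v) - (\<Sum>u\<in>V. \<mu> u * f u) \<le> wasserstein V H w \<mu> \<nu>"
  unfolding wasserstein_def
  using coupling_product[OF assms(1-4)] coupling_cost_ge_potential_gap[OF _ assms(5)]
  by (intro cInf_greatest) auto

text \<open>One lazy random-walk step from x: stay with probability \<alpha>, otherwise pick an incident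
  hyperedge h' (x \<in> S h') with probability proportional to its weight and move to a uniformly
  chosen vertex of T h'. The measures of the paper are the cases (S, T) = (snd, fst) for the tail
  and (fst, snd) for the head, scaled by 1/k.\<close>

definition incident_weight :: "('h \<Rightarrow> 'v set) \<Rightarrow> 'h set \<Rightarrow> ('h \<Rightarrow> real) \<Rightarrow> 'v \<Rightarrow> real" where
  "incident_weight S H w x = (\<Sum>h'\<in>{h'\<in>H. x \<in> S h'}. w h')"

definition flow :: "('h \<Rightarrow> 'v set) \<Rightarrow> ('h \<Rightarrow> 'v set) \<Rightarrow> 'h set \<Rightarrow> ('h \<Rightarrow> real) \<Rightarrow> 'v \<Rightarrow> 'v \<Rightarrow> real" where
  "flow S T H w x z = (\<Sum>h'\<in>{h'\<in>H. x \<in> S h' \<and> z \<in> T h'}. w h' / real (card (T h')))"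

definition step_measure ::
    "('h \<Rightarrow> 'v set) \<Rightarrow> ('h \<Rightarrow> 'v set) \<Rightarrow> 'h set \<Rightarrow> ('h \<Rightarrow> real) \<Rightarrow> real \<Rightarrow> real \<Rightarrow> 'v \<Rightarrow> 'v \<Rightarrow> real" where
  "step_measure S T H w \<alpha> k x z =
     (if z = x then \<alpha> / k else (1 - \<alpha>) / (k * incident_weight S H w x) * flow S T H w x z)"

lemma step_measure_alt_def:
  "step_measure S T H w \<alpha> k x z =
    (if z = x then \<alpha> / k
     else if z \<in> {z. \<exists>h'\<in>H. x \<in> S h' \<and> z \<in> T h'} then
       (1 - \<alpha>) * (\<Sum>h'\<in>{h'\<in>H. x \<in> S h' \<and> z \<in> T h'}.
           (1 / (k * real (card (T h')))) * (w h' / incident_weight S H w x))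
     else 0)"
proof (cases "z \<in> {z. \<exists>h'\<in>H. x \<in> S h' \<and> z \<in> T h'}")
  case True
  have "(1 - \<alpha>) * (\<Sum>h'\<in>F. (1 / (k * real (card (T h')))) * (w h' / W))
      = (1 - \<alpha>) / (k * W) * (\<Sum>h'\<in>F. w h' / real (card (T h')))" for F and W :: real
    by (simp add: sum_distrib_left mult_ac)
  with True show ?thesis
    by (simp add: step_measure_def flow_def)
next
  case False
  then have "{h'\<in>H. x \<in> S h' \<and> z \<in> T h'} = {}"
    by blast
  then have "flow S T H w x z = 0"
    unfolding flow_def by (simp only: sum.empty)
  with False show ?thesis
    by (auto simp: step_measure_def)
qed

lemma mu_tail_vertex_eq_step_measure:
  "mu_tail_vertex H w \<alpha> n x = step_measure snd fst H w \<alpha> (real n) x"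
  unfolding fun_eq_iff mu_tail_vertex_def Gamma_in_def incident_weight_def[symmetric]
  by (intro allI) (rule step_measure_alt_def[symmetric])

lemma mu_head_vertex_eq_step_measure:
  "mu_head_vertex H w \<alpha> m y = step_measure fst snd H w \<alpha> (real m) y"
  unfolding fun_eq_iff mu_head_vertex_def Gamma_out_def incident_weight_def[symmetric]
  by (intro allI) (rule step_measure_alt_def[symmetric])

lemma mu_tail_eq_sum_step_measure:
  "mu_tail H w \<alpha> h z = (\<Sum>x\<in>fst h. step_measure snd fst H w \<alpha> (real (card (fst h))) x z)"
  unfolding mu_tail_def mu_tail_vertex_eq_step_measure ..

lemma mu_head_eq_sum_step_measure:
  "mu_head H w \<alpha> h z = (\<Sum>y\<in>snd h. step_measure fst snd H w \<alpha> (real (card (snd h))) y z)"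
  unfolding mu_head_def mu_head_vertex_eq_step_measure ..

lemma incident_weight_pos:
  assumes "finite H" "\<forall>h\<in>H. 0 < w h" "h \<in> H" "x \<in> S h"
  shows "0 < incident_weight S H w x"
  unfolding incident_weight_def using assms by (intro sum_pos) auto

lemma flow_nonneg: "\<forall>h\<in>H. 0 \<le> w h \<Longrightarrow> 0 \<le> flow S T H w x z"
  unfolding flow_def by (auto intro: sum_nonneg)

lemma flow_self:
  assumes "\<forall>h\<in>H. x \<in> S h \<longrightarrow> x \<notin> T h"
  shows "flow S T H w x x = 0"
proof -
  have "{h'\<in>H. x \<in> S h' \<and> x \<in> T h'} = {}"
    using assms by blast
  then show ?thesis
    unfolding flow_def by (simp only: sum.empty)
qed

lemma sum_flow:
  assumes "finite V" "finite H" "\<forall>h\<in>H. T h \<subseteq> V \<and> T h \<noteq> {}"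
  shows "(\<Sum>z\<in>V. flow S T H w x z) = incident_weight S H w x"
proof -
  have "(\<Sum>z\<in>V. flow S T H w x z)
      = (\<Sum>z\<in>V. \<Sum>h'\<in>{h'\<in>{h'\<in>H. x \<in> S h'}. z \<in> T h'}. w h' / real (card (T h')))"
    unfolding flow_def by (intro sum.cong) auto
  also have "\<dots> = (\<Sum>h'\<in>{h'\<in>H. x \<in> S h'}. \<Sum>z\<in>{z\<in>V. z \<in> T h'}. w h' / real (card (T h')))"
    using assms(1,2) by (intro sum.swap_restrict) auto
  also have "\<dots> = (\<Sum>h'\<in>{h'\<in>H. x \<in> S h'}. w h')"
  proof (intro sum.cong refl)
    fix h' assume "h' \<in> {h'\<in>H. x \<in> S h'}"
    then have "{z\<in>V. z \<in> T h'} = T h'" "card (T h') \<noteq> 0"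
      using assms by (auto simp: card_gt_0_iff dest: finite_subset)
    then show "(\<Sum>z\<in>{z\<in>V. z \<in> T h'}. w h' / real (card (T h'))) = w h'" by simp
  qed
  finally show ?thesis unfolding incident_weight_def .
qed

lemma step_measure_nonneg:
  assumes "0 \<le> \<alpha>" "\<alpha> \<le> 1" "0 \<le> k" "0 \<le> incident_weight S H w x" "\<forall>h\<in>H. 0 \<le> w h"
  shows "0 \<le> step_measure S T H w \<alpha> k x z"
  using assms flow_nonneg[OF assms(5)]
  by (auto simp: step_measure_def intro!: mult_nonneg_nonneg divide_nonneg_nonneg)

definition walk_mean :: "('h \<Rightarrow> 'v set) \<Rightarrow> ('h \<Rightarrow> 'v set) \<Rightarrow> 'h set \<Rightarrow> ('h \<Rightarrow> real) \<Rightarrow> 'v set \<Rightarrow> 'v \<Rightarrow> ('v \<Rightarrow> real) \<Rightarrow> real" where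
  "walk_mean S T H w V x g = (\<Sum>z\<in>V. flow S T H w x z * g z) / incident_weight S H w x"

locale lazy_walk_vertex =
  fixes S T :: "'h \<Rightarrow> 'v set" and H :: "'h set" and w :: "'h \<Rightarrow> real" and V :: "'v set" and x :: 'v
  assumes finite_V: "finite V" and x_in_V: "x \<in> V"
    and weight_nonneg: "\<forall>h\<in>H. 0 \<le> w h"
    and flow_self_eq_0: "flow S T H w x x = 0"
    and sum_flow_eq: "(\<Sum>z\<in>V. flow S T H w x z) = incident_weight S H w x"
    and positive_incident_weight: "0 < incident_weight S H w x"
begin

lemma sum_step_measure_mult:
  "(\<Sum>z\<in>V. step_measure S T H w \<alpha> k x z * g z) = (\<alpha> * g x + (1 - \<alpha>) * walk_mean S T H w V x g) / k"
proof -
  have "step_measure S T H w \<alpha> k x z * g z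
      = (if z = x then \<alpha> / k * g x else 0) + (1 - \<alpha>) / (k * incident_weight S H w x) * (flow S T H w x z * g z)"
    for z using flow_self_eq_0 by (simp add: step_measure_def)
  then show ?thesis
    using finite_V x_in_V
    by (simp add: sum.distrib walk_mean_def add_divide_distrib mult.commute flip: sum_distrib_left sum_divide_distrib)
qed

lemma walk_mean_const: "walk_mean S T H w V x (\<lambda>_. c) = c"
  using positive_incident_weight by (simp add: walk_mean_def sum_flow_eq flip: sum_distrib_right)

lemma walk_mean_mono:
  assumes "\<forall>z\<in>V. g z \<le> g' z"
  shows "walk_mean S T H w V x g \<le> walk_mean S T H w V x g'"
  unfolding walk_mean_def using assms positive_incident_weight flow_nonneg[OF weight_nonneg]
  by (intro divide_right_mono sum_mono mult_left_mono) auto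

end

locale strongly_connected_hypergraph =
  fixes V :: "'v set" and H :: "'v hedge set" and w :: "'v hedge \<Rightarrow> real"
  assumes dir_hypergraph: "dir_hypergraph V H w"
    and loopless: "loopless H"
    and strongly_connected: "strongly_connected V H"
    and two_vertices: "card V \<ge> 2"
begin

lemma finite_V: "finite V" and finite_H: "finite H" and weight_pos: "\<forall>h\<in>H. 0 < w h"
  and tail_subset: "h \<in> H \<Longrightarrow> fst h \<subseteq> V" and head_subset: "h \<in> H \<Longrightarrow> snd h \<subseteq> V"
  and tail_nonempty: "h \<in> H \<Longrightarrow> fst h \<noteq> {}" and head_nonempty: "h \<in> H \<Longrightarrow> snd h \<noteq> {}"
  using dir_hypergraph by (auto simp: dir_hypergraph_def)

lemma weight_nonneg: "\<forall>h\<in>H. 0 \<le> w h"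
  using weight_pos by (simp add: less_imp_le)

lemma tail_head_disjoint: "h \<in> H \<Longrightarrow> fst h \<inter> snd h = {}"
  using loopless by (simp add: loopless_def)

lemma path_exists: "u \<in> V \<Longrightarrow> v \<in> V \<Longrightarrow> u \<noteq> v \<Longrightarrow> \<exists>\<gamma>. is_dpath H u v \<gamma>"
  using strongly_connected by (simp add: strongly_connected_def)

lemma qdist_pos: "u \<in> V \<Longrightarrow> v \<in> V \<Longrightarrow> u \<noteq> v \<Longrightarrow> 0 < qdist H w u v"
  using path_exists qdist_pos_if_path[OF finite_H weight_pos] by blast

lemma qdist_nonneg: "u \<in> V \<Longrightarrow> v \<in> V \<Longrightarrow> 0 \<le> qdist H w u v"
  by (cases "u = v") (auto intro: less_imp_le qdist_pos)

lemma qdist_triangle: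
  "x \<in> V \<Longrightarrow> u \<in> V \<Longrightarrow> v \<in> V \<Longrightarrow> qdist H w x v \<le> qdist H w x u + qdist H w u v"
  by (rule qdist_triangle_if_connected[OF weight_nonneg path_exists])

lemma qdist_le_diam: "u \<in> V \<Longrightarrow> v \<in> V \<Longrightarrow> qdist H w u v \<le> diam V H w"
proof -
  have "{qdist H w u v | u v. u \<in> V \<and> v \<in> V} = (\<lambda>(u, v). qdist H w u v) ` (V \<times> V)"
    by auto
  then show "u \<in> V \<Longrightarrow> v \<in> V \<Longrightarrow> qdist H w u v \<le> diam V H w"
    unfolding diam_def using finite_V by (auto intro!: Max_ge)
qed

lemma other_vertex_exists:
  assumes "x \<in> V"
  obtains u where "u \<in> V" "u \<noteq> x"
proof -
  have "\<not> V \<subseteq> {x}"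
    using two_vertices card_mono[of "{x}" V] by auto
  then show ?thesis using that by blast
qed

lemma out_edge_exists:
  assumes "x \<in> V"
  shows "\<exists>h\<in>H. x \<in> fst h"
proof -
  obtain u where "u \<in> V" "u \<noteq> x"
    using other_vertex_exists[OF assms] .
  then obtain \<gamma> where "is_dpath H x u \<gamma>"
    using path_exists assms by blast
  then have "hd \<gamma> \<in> H" "x \<in> fst (hd \<gamma>)"
    unfolding is_dpath_def by auto
  then show ?thesis by blast
qed

lemma in_edge_exists:
  assumes "x \<in> V"
  shows "\<exists>h\<in>H. x \<in> snd h"
proof -
  obtain u where "u \<in> V" "u \<noteq> x"
    using other_vertex_exists[OF assms] .
  then obtain \<gamma> where "is_dpath H u x \<gamma>"
    using path_exists assms by blast
  then have "last \<gamma> \<in> H" "x \<in> snd (last \<gamma>)"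
    unfolding is_dpath_def by auto
  then show ?thesis by blast
qed

lemma lazy_walk_out:
  assumes "x \<in> V"
  shows "lazy_walk_vertex fst snd H w V x"
proof
  show "finite V" "x \<in> V" "\<forall>h\<in>H. 0 \<le> w h"
    using finite_V assms weight_nonneg .
  show "flow fst snd H w x x = 0"
    by (rule flow_self) (use tail_head_disjoint in blast)
  show "(\<Sum>z\<in>V. flow fst snd H w x z) = incident_weight fst H w x"
    by (rule sum_flow[OF finite_V finite_H]) (use head_subset head_nonempty in blast)
  show "0 < incident_weight fst H w x"
    using out_edge_exists[OF assms] by (metis incident_weight_pos[OF finite_H weight_pos])
qed

lemma lazy_walk_in:
  assumes "x \<in> V"
  shows "lazy_walk_vertex snd fst H w V x"
proof
  show "finite V" "x \<in> V" "\<forall>h\<in>H. 0 \<le> w h"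
    using finite_V assms weight_nonneg .
  show "flow snd fst H w x x = 0"
    by (rule flow_self) (use tail_head_disjoint in blast)
  show "(\<Sum>z\<in>V. flow snd fst H w x z) = incident_weight snd H w x"
    by (rule sum_flow[OF finite_V finite_H]) (use tail_subset tail_nonempty in blast)
  show "0 < incident_weight snd H w x"
    using in_edge_exists[OF assms] by (metis incident_weight_pos[OF finite_H weight_pos])
qed

end

locale strongly_connected_hypergraph_edge = strongly_connected_hypergraph +
  fixes h :: "'v hedge"
  assumes h_in_H: "h \<in> H"
begin

lemma h_tail_subset: "fst h \<subseteq> V" and h_head_subset: "snd h \<subseteq> V"
  and h_tail_nonempty: "fst h \<noteq> {}" and h_head_nonempty: "snd h \<noteq> {}"
  using h_in_H tail_subset head_subset tail_nonempty head_nonempty by blast+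

lemma finite_tail: "finite (fst h)" and finite_head: "finite (snd h)"
  using finite_subset[OF h_tail_subset finite_V] finite_subset[OF h_head_subset finite_V] .

lemma distA_eq_Min: "distA H w h z = Min ((\<lambda>x. qdist H w x z) ` fst h)"
proof -
  have "{qdist H w x z | x. x \<in> fst h} = (\<lambda>x. qdist H w x z) ` fst h"
    by auto
  then show ?thesis
    unfolding distA_def by simp
qed

lemma distA_attained: "\<exists>x\<in>fst h. distA H w h z = qdist H w x z"
proof -
  have "distA H w h z \<in> (\<lambda>x. qdist H w x z) ` fst h"
    unfolding distA_eq_Min using finite_tail h_tail_nonempty by (intro Min_in) auto
  then show ?thesis by blast
qed

lemma distA_le_qdist: "x \<in> fst h \<Longrightarrow> distA H w h z \<le> qdist H w x z"
  using finite_tail by (simp add: distA_eq_Min)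

lemma distA_nonneg: "z \<in> V \<Longrightarrow> 0 \<le> distA H w h z"
  using distA_attained qdist_nonneg h_tail_subset by (metis subsetD)

lemma distA_tail: "x \<in> fst h \<Longrightarrow> distA H w h x = 0"
  using distA_le_qdist[of x x] distA_nonneg[of x] h_tail_subset by auto

lemma distA_le_diam: "z \<in> V \<Longrightarrow> distA H w h z \<le> diam V H w"
  using distA_attained qdist_le_diam h_tail_subset by (metis subsetD)

lemma distA_lipschitz:
  assumes "u \<in> V" "v \<in> V"
  shows "distA H w h v - distA H w h u \<le> qdist H w u v"
proof -
  obtain x where x: "x \<in> fst h" "distA H w h u = qdist H w x u"
    using distA_attained by blast
  then have "x \<in> V"
    using h_tail_subset by blast
  have "distA H w h v \<le> qdist H w x v"
    using distA_le_qdist[OF x(1)] .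
  also have "\<dots> \<le> qdist H w x u + qdist H w u v"
    using qdist_triangle[OF \<open>x \<in> V\<close> assms] .
  finally show ?thesis
    using x(2) by simp
qed

lemma Lh_eq_Min: "Lh H w h = Min ((\<lambda>(x, y). qdist H w x y) ` (fst h \<times> snd h))"
proof -
  have "{qdist H w x y | x y. x \<in> fst h \<and> y \<in> snd h} = (\<lambda>(x, y). qdist H w x y) ` (fst h \<times> snd h)"
    by auto
  then show ?thesis
    unfolding Lh_def by simp
qed

lemma Lh_le_distA:
  assumes "y \<in> snd h"
  shows "Lh H w h \<le> distA H w h y"
proof -
  obtain x where "x \<in> fst h" "distA H w h y = qdist H w x y"
    using distA_attained by blast
  with assms show ?thesis
    unfolding Lh_eq_Min using finite_tail finite_head by (auto intro: Min_le)
qed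

lemma Lh_pos: "0 < Lh H w h"
proof -
  have "Lh H w h \<in> (\<lambda>(x, y). qdist H w x y) ` (fst h \<times> snd h)"
    unfolding Lh_eq_Min using finite_tail finite_head h_tail_nonempty h_head_nonempty
    by (intro Min_in) auto
  then obtain x y where "x \<in> fst h" "y \<in> snd h" "Lh H w h = qdist H w x y"
    by auto
  then show ?thesis
    using qdist_pos tail_head_disjoint[OF h_in_H] h_tail_subset h_head_subset
    by (metis disjoint_iff subsetD)
qed

text \<open>Why C(y, w) appears: a jump from y into Gamma_minus y lowers the distance to A_h by at most
  C1(y), a jump into Gamma_plus y raises it by at least C2(y), and every other jump keeps it.\<close>

lemma flow_distA_increment_ge:
  assumes "y \<in> V"
  shows "- (incident_weight fst H w y * Cw H w h y)
    \<le> (\<Sum>z\<in>V. flow fst snd H w y z * (distA H w h z - distA H w h y))"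
proof -
  define f where "f = distA H w h"
  define q where "q = flow fst snd H w y"
  define Gm where "Gm = Gamma_minus H w h y"
  define Gp where "Gp = Gamma_plus H w h y"
  have Gm: "Gm = {z \<in> Gamma_out H y. f z < f y}" and Gp: "Gp = {z \<in> Gamma_out H y. f y < f z}"
    unfolding Gm_def Gp_def f_def Gamma_minus_def Gamma_plus_def by simp_all
  have "Gamma_out H y \<subseteq> V"
    using head_subset by (auto simp: Gamma_out_def)
  then have "Gm \<subseteq> V" "Gp \<subseteq> V" "finite Gm" "finite Gp"
    using finite_V by (auto simp: Gm Gp dest: finite_subset)
  have q_nonneg: "0 \<le> q z" for z
    unfolding q_def by (rule flow_nonneg[OF weight_nonneg])
  have pointwise: "(if z \<in> Gm then - (C1 H w h y * q z) else 0) + (if z \<in> Gp then C2 H w h y * q z else 0)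
      \<le> q z * (f z - f y)" for z
  proof -
    consider "z \<in> Gm" | "z \<in> Gp" | "z \<in> Gamma_out H y" "f z = f y" | "z \<notin> Gamma_out H y"
      using Gm Gp by fastforce
    then show ?thesis
    proof cases
      case 1
      have "C1 H w h y = f y - Min (f ` Gm)"
        unfolding C1_def Gm_def[symmetric] f_def[symmetric] using 1 by auto
      moreover have "Min (f ` Gm) \<le> f z" "z \<notin> Gp"
        using 1 \<open>finite Gm\<close> by (auto simp: Gm Gp)
      ultimately have "- C1 H w h y \<le> f z - f y"
        by simp
      from mult_left_mono[OF this q_nonneg[of z]] show ?thesis
        using 1 \<open>z \<notin> Gp\<close> by (simp add: mult.commute)
    next
      case 2
      have "C2 H w h y = Min (f ` Gp) - f y"
        unfolding C2_def Gp_def[symmetric] f_def[symmetric] using 2 by auto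
      moreover have "Min (f ` Gp) \<le> f z" "z \<notin> Gm"
        using 2 \<open>finite Gp\<close> by (auto simp: Gm Gp)
      ultimately have "C2 H w h y \<le> f z - f y"
        by simp
      from mult_left_mono[OF this q_nonneg[of z]] show ?thesis
        using 2 \<open>z \<notin> Gm\<close> by (simp add: mult.commute)
    next
      case 3
      then show ?thesis by (simp add: Gm Gp)
    next
      case 4
      then have "{h'\<in>H. y \<in> fst h' \<and> z \<in> snd h'} = {}"
        unfolding Gamma_out_def by blast
      then have "q z = 0"
        unfolding q_def flow_def by (simp only: sum.empty)
      then show ?thesis by simp
    qed
  qed
  have "Cw H w h y = (C1 H w h y * sum q Gm - C2 H w h y * sum q Gp) / incident_weight fst H w y"
    unfolding Cw_def q_def Gm_def Gp_def flow_def incident_weight_def ..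
  then have "- (incident_weight fst H w y * Cw H w h y) = - (C1 H w h y * sum q Gm) + C2 H w h y * sum q Gp"
    using lazy_walk_vertex.positive_incident_weight[OF lazy_walk_out[OF assms]] by simp
  also have "\<dots> = (\<Sum>z\<in>V. (if z \<in> Gm then - (C1 H w h y * q z) else 0) + (if z \<in> Gp then C2 H w h y * q z else 0))"
    using \<open>Gm \<subseteq> V\<close> \<open>Gp \<subseteq> V\<close>
    by (simp add: sum.distrib Int_absorb1 sum_distrib_left sum_negf flip: sum.inter_restrict[OF finite_V])
  also have "\<dots> \<le> (\<Sum>z\<in>V. q z * (f z - f y))"
    by (rule sum_mono) (rule pointwise)
  finally show ?thesis
    unfolding q_def f_def .
qed

lemma walk_mean_distA_ge:
  assumes "y \<in> V"
  shows "distA H w h y - Cw H w h y \<le> walk_mean fst snd H w V y (distA H w h)"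
proof -
  interpret lazy_walk_vertex fst snd H w V y
    using lazy_walk_out[OF assms] .
  let ?W = "incident_weight fst H w y" and ?f = "distA H w h"
  have "(\<Sum>z\<in>V. flow fst snd H w y z * (?f z - ?f y)) = (\<Sum>z\<in>V. flow fst snd H w y z * ?f z) - ?W * ?f y"
    by (simp add: right_diff_distrib sum_subtractf sum_flow_eq flip: sum_distrib_right)
  then have "?W * (?f y - Cw H w h y) \<le> (\<Sum>z\<in>V. flow fst snd H w y z * ?f z)"
    using flow_distA_increment_ge[OF assms] by (simp add: algebra_simps)
  then show ?thesis
    unfolding walk_mean_def using positive_incident_weight by (simp add: le_divide_eq mult.commute)
qed

lemma sum_mu_tail_mult:
  "(\<Sum>z\<in>V. mu_tail H w \<alpha> h z * g z)
     = (\<Sum>x\<in>fst h. (\<alpha> * g x + (1 - \<alpha>) * walk_mean snd fst H w V x g) / real (card (fst h)))"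
  unfolding mu_tail_eq_sum_step_measure sum_distrib_right
  using lazy_walk_vertex.sum_step_measure_mult[OF lazy_walk_in] h_tail_subset
  by (subst sum.swap, intro sum.cong refl) (auto simp: subset_iff)

lemma sum_mu_head_mult:
  "(\<Sum>z\<in>V. mu_head H w \<alpha> h z * g z)
     = (\<Sum>y\<in>snd h. (\<alpha> * g y + (1 - \<alpha>) * walk_mean fst snd H w V y g) / real (card (snd h)))"
  unfolding mu_head_eq_sum_step_measure sum_distrib_right
  using lazy_walk_vertex.sum_step_measure_mult[OF lazy_walk_out] h_head_subset
  by (subst sum.swap, intro sum.cong refl) (auto simp: subset_iff)

lemma sum_mu_tail: "(\<Sum>z\<in>V. mu_tail H w \<alpha> h z) = 1"
  using sum_mu_tail_mult[of \<alpha> "\<lambda>_. 1"] lazy_walk_vertex.walk_mean_const[OF lazy_walk_in]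
    h_tail_subset finite_tail h_tail_nonempty
  by (simp add: subset_iff)

lemma sum_mu_head: "(\<Sum>z\<in>V. mu_head H w \<alpha> h z) = 1"
  using sum_mu_head_mult[of \<alpha> "\<lambda>_. 1"] lazy_walk_vertex.walk_mean_const[OF lazy_walk_out]
    h_head_subset finite_head h_head_nonempty
  by (simp add: subset_iff)

lemma mu_tail_nonneg: "0 \<le> \<alpha> \<Longrightarrow> \<alpha> \<le> 1 \<Longrightarrow> 0 \<le> mu_tail H w \<alpha> h z"
  unfolding mu_tail_eq_sum_step_measure
  using lazy_walk_vertex.positive_incident_weight[OF lazy_walk_in] h_tail_subset
  by (intro sum_nonneg step_measure_nonneg weight_nonneg) (auto intro: less_imp_le)

lemma mu_head_nonneg: "0 \<le> \<alpha> \<Longrightarrow> \<alpha> \<le> 1 \<Longrightarrow> 0 \<le> mu_head H w \<alpha> h z"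
  unfolding mu_head_eq_sum_step_measure
  using lazy_walk_vertex.positive_incident_weight[OF lazy_walk_out] h_head_subset
  by (intro sum_nonneg step_measure_nonneg weight_nonneg) (auto intro: less_imp_le)

lemma sum_mu_tail_distA_le:
  assumes "\<alpha> \<le> 1"
  shows "(\<Sum>z\<in>V. mu_tail H w \<alpha> h z * distA H w h z) \<le> (1 - \<alpha>) * diam V H w"
proof -
  have "(\<alpha> * distA H w h x + (1 - \<alpha>) * walk_mean snd fst H w V x (distA H w h)) / real (card (fst h))
      \<le> (1 - \<alpha>) * diam V H w / real (card (fst h))" if "x \<in> fst h" for x
  proof -
    interpret lazy_walk_vertex snd fst H w V x
      using lazy_walk_in that h_tail_subset by blast
    have "walk_mean snd fst H w V x (distA H w h) \<le> diam V H w"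
      using walk_mean_mono[of "distA H w h" "\<lambda>_. diam V H w"] distA_le_diam
      by (simp add: walk_mean_const)
    then show ?thesis
      using assms distA_tail[OF that] by (simp add: divide_right_mono mult_left_mono)
  qed
  then have "(\<Sum>z\<in>V. mu_tail H w \<alpha> h z * distA H w h z)
      \<le> (\<Sum>x\<in>fst h. (1 - \<alpha>) * diam V H w / real (card (fst h)))"
    unfolding sum_mu_tail_mult by (rule sum_mono)
  then show ?thesis
    using finite_tail h_tail_nonempty by simp
qed

lemma sum_mu_head_distA_ge:
  assumes "\<alpha> \<le> 1"
  shows "Lh H w h - (1 - \<alpha>) / real (card (snd h)) * (\<Sum>y\<in>snd h. Cw H w h y)
    \<le> (\<Sum>z\<in>V. mu_head H w \<alpha> h z * distA H w h z)"
proof -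
  have "(Lh H w h - (1 - \<alpha>) * Cw H w h y) / real (card (snd h))
      \<le> (\<alpha> * distA H w h y + (1 - \<alpha>) * walk_mean fst snd H w V y (distA H w h)) / real (card (snd h))"
    if "y \<in> snd h" for y
  proof -
    have "y \<in> V"
      using that h_head_subset by blast
    have "Lh H w h - (1 - \<alpha>) * Cw H w h y \<le> \<alpha> * distA H w h y + (1 - \<alpha>) * (distA H w h y - Cw H w h y)"
      using Lh_le_distA[OF that] by (simp add: algebra_simps)
    also have "\<dots> \<le> \<alpha> * distA H w h y + (1 - \<alpha>) * walk_mean fst snd H w V y (distA H w h)"
      using walk_mean_distA_ge[OF \<open>y \<in> V\<close>] assms by (simp add: mult_left_mono)
    finally show ?thesis
      by (simp add: divide_right_mono)
  qed
  then have "(\<Sum>y\<in>snd h. (Lh H w h - (1 - \<alpha>) * Cw H w h y) / real (card (snd h)))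
      \<le> (\<Sum>z\<in>V. mu_head H w \<alpha> h z * distA H w h z)"
    unfolding sum_mu_head_mult by (rule sum_mono)
  moreover have "(\<Sum>y\<in>snd h. (Lh H w h - c * Cw H w h y) / real (card (snd h)))
      = Lh H w h - c / real (card (snd h)) * (\<Sum>y\<in>snd h. Cw H w h y)" for c
    using finite_head h_head_nonempty
    by (simp add: sum_subtractf diff_divide_distrib sum_distrib_left)
  ultimately show ?thesis
    by simp
qed

end

theorem mainTheorem6:
  fixes V :: "'v set" and H :: "'v hedge set" and w :: "'v hedge \<Rightarrow> real"
    and h :: "'v hedge" and \<alpha> :: real
  assumes "dir_hypergraph V H w"
    and "loopless H"
    and "strongly_connected V H"
    and "card V \<ge> 2"
    and "h \<in> H"
    and "0 \<le> \<alpha>" and "\<alpha> \<le> 1"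
  shows "kappa V H w \<alpha> h \<le>
    (1 - \<alpha>) / Lh H w h *
      ((1 / real (card (snd h))) * (\<Sum>y\<in>snd h. Cw H w h y) + diam V H w)"
proof -
  interpret strongly_connected_hypergraph_edge V H w h
    using assms(1-5) by unfold_locales
  let ?f = "distA H w h" and ?\<mu> = "mu_tail H w \<alpha> h" and ?\<nu> = "mu_head H w \<alpha> h"
  let ?X = "1 / real (card (snd h)) * (\<Sum>y\<in>snd h. Cw H w h y) + diam V H w"
  have "(\<Sum>v\<in>V. ?\<nu> v * ?f v) - (\<Sum>u\<in>V. ?\<mu> u * ?f u) \<le> wasserstein V H w ?\<mu> ?\<nu>"
    using assms(6,7) mu_tail_nonneg mu_head_nonneg sum_mu_tail sum_mu_head distA_lipschitz
    by (intro wasserstein_ge_potential_gap) auto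
  then have "Lh H w h - (1 - \<alpha>) * ?X \<le> wasserstein V H w ?\<mu> ?\<nu>"
    using sum_mu_tail_distA_le[OF assms(7)] sum_mu_head_distA_ge[OF assms(7)]
    by (simp add: algebra_simps)
  then have "1 - wasserstein V H w ?\<mu> ?\<nu> / Lh H w h \<le> 1 - (Lh H w h - (1 - \<alpha>) * ?X) / Lh H w h"
    using Lh_pos by (simp add: divide_right_mono)
  also have "\<dots> = (1 - \<alpha>) / Lh H w h * ?X"
    using Lh_pos by (simp add: field_simps)
  finally show ?thesis
    unfolding kappa_def .
qed

end
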